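(* For every $\kappa\in(0,1)$ the function $H_\kappa$ is smooth and $$H_\kappa(x)=1+\frac{x^2}{2(1-\kappa)^2}+o\Big(\frac{x^2}{(1-\kappa)^2}\Big)\quad(x\to0),\qquad H_\kappa(x)=x+\kappa\ln x+\kappa^2\frac{\ln x}{x}+\mathcal O(1)\quad(x\to\infty).$$
   Context: For $\kappa\in(0,1)$ let $G_\kappa:[1,\infty)\to[0,\infty)$, $G_\kappa(x)=\sqrt{x^2-1}-\kappa\ln(x+\sqrt{x^2-1})$, which is a strictly increasing bijection, and $H_\kappa=G_\kappa^{-1}:[0,\infty)\to[1,\infty)$. *)

theory Defs
  imports "HOL-Analysis.Analysis" "HOL-Library.Landau_Symbols"
begin

definition G :: "real \<Rightarrow> real \<Rightarrow> real" where
  "G \<kappa> x = sqrt (x\<^sup>2 - 1) - \<kappa> * ln (x + sqrt (x\<^sup>2 - 1))"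

text \<open>H kappa is the inverse of G kappa restricted to [1,oo); it is meaningful on [0,oo).\<close>
definition H :: "real \<Rightarrow> real \<Rightarrow> real" where
  "H \<kappa> = inv_into {1..} (G \<kappa>)"

end

theory Submission
  imports Defs "HOL-Real_Asymp.Real_Asymp"
begin

text \<open>Substituting \<open>x = cosh t\<close> turns \<open>G\<^sub>\<kappa>\<close> into \<open>t \<mapsto> sinh t - \<kappa> t\<close>, a smooth odd bijection of
  \<open>\<real>\<close> with derivative \<open>cosh t - \<kappa> > 0\<close>; so \<open>H\<^sub>\<kappa> = cosh \<circ> h\<close> with \<open>h\<close> its inverse. Every derivative
  of \<open>cosh \<circ> h\<close> is \<open>p \<circ> h\<close> for a polynomial \<open>p\<close> in \<open>cosh\<close>, \<open>sinh\<close> and \<open>1/(cosh - \<kappa>)\<close>, because this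
  ring is closed under differentiation and \<open>h' = 1/(cosh - \<kappa>) \<circ> h\<close>. The two expansions are
  expansions of \<open>cosh t\<close> in terms of \<open>sinh t - \<kappa> t\<close> for \<open>t \<rightarrow> 0\<^sup>+\<close> and \<open>t \<rightarrow> \<infinity>\<close>, transported
  along \<open>h\<close>.\<close>

definition derivative_closed :: "(real \<Rightarrow> real) set \<Rightarrow> bool" where
  "derivative_closed S \<longleftrightarrow> (\<forall>f\<in>S. \<exists>f'\<in>S. \<forall>t. (f has_real_derivative f' t) (at t))"

lemma derivative_closed_derivatives:
  assumes "derivative_closed S" "f \<in> S"
  shows "\<exists>D. D 0 = f \<and> (\<forall>n t. (D n has_real_derivative D (Suc n) t) (at t))"
proof -
  obtain der where der: "\<And>f. f \<in> S \<Longrightarrow> der f \<in> S \<and> (\<forall>t. (f has_real_derivative der f t) (at t))"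
    using assms(1) unfolding derivative_closed_def by metis
  have in_S: "(der ^^ n) f \<in> S" for n
    by (induction n) (simp_all add: assms(2) der)
  show ?thesis
    by (intro exI[of _ "\<lambda>n. (der ^^ n) f"]) (simp add: der[OF in_S])
qed

lemma derivative_closed_compose:
  assumes "derivative_closed S"
    and mult: "\<And>f g. f \<in> S \<Longrightarrow> g \<in> S \<Longrightarrow> (\<lambda>t. f t * g t) \<in> S"
    and "w \<in> S" and h: "\<And>y. (h has_real_derivative w (h y)) (at y)"
  shows "derivative_closed ((\<lambda>f. f \<circ> h) ` S)"
  unfolding derivative_closed_def
proof
  fix fh assume "fh \<in> (\<lambda>f. f \<circ> h) ` S"
  then obtain f where f: "f \<in> S" and fh: "fh = f \<circ> h" by blast
  then obtain f' where f': "f' \<in> S" "\<And>t. (f has_real_derivative f' t) (at t)"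
    using assms(1) unfolding derivative_closed_def by blast
  have "(fh has_real_derivative ((\<lambda>t. f' t * w t) \<circ> h) y) (at y)" for y
    unfolding fh comp_def by (rule DERIV_chain2[OF f'(2) h])
  moreover have "(\<lambda>t. f' t * w t) \<circ> h \<in> (\<lambda>f. f \<circ> h) ` S"
    using mult[OF f'(1) \<open>w \<in> S\<close>] by blast
  ultimately show "\<exists>g\<in>(\<lambda>f. f \<circ> h) ` S. \<forall>y. (fh has_real_derivative g y) (at y)"
    by blast
qed

inductive_set hyperbolic_ring :: "real \<Rightarrow> (real \<Rightarrow> real) set" for \<kappa> where
  const: "(\<lambda>t. c) \<in> hyperbolic_ring \<kappa>"
| cosh: "cosh \<in> hyperbolic_ring \<kappa>"
| sinh: "sinh \<in> hyperbolic_ring \<kappa>"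
| inverse_cosh_diff: "(\<lambda>t. 1 / (cosh t - \<kappa>)) \<in> hyperbolic_ring \<kappa>"
| add: "f \<in> hyperbolic_ring \<kappa> \<Longrightarrow> g \<in> hyperbolic_ring \<kappa> \<Longrightarrow> (\<lambda>t. f t + g t) \<in> hyperbolic_ring \<kappa>"
| mult: "f \<in> hyperbolic_ring \<kappa> \<Longrightarrow> g \<in> hyperbolic_ring \<kappa> \<Longrightarrow> (\<lambda>t. f t * g t) \<in> hyperbolic_ring \<kappa>"

lemma cosh_diff_pos: "\<kappa> < 1 \<Longrightarrow> 0 < cosh (t::real) - \<kappa>"
  using cosh_real_ge_1[of t] by linarith

lemma derivative_closed_hyperbolic_ring:
  assumes "\<kappa> < 1"
  shows "derivative_closed (hyperbolic_ring \<kappa>)"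
  unfolding derivative_closed_def
proof
  fix f assume "f \<in> hyperbolic_ring \<kappa>"
  then show "\<exists>f'\<in>hyperbolic_ring \<kappa>. \<forall>t. (f has_real_derivative f' t) (at t)"
  proof induction
    case const
    show ?case by (intro bexI[of _ "\<lambda>t. 0"]) (auto intro: hyperbolic_ring.intros)
  next
    case cosh
    show ?case by (intro bexI[of _ sinh]) (auto intro: hyperbolic_ring.intros derivative_eq_intros)
  next
    case sinh
    show ?case by (intro bexI[of _ cosh]) (auto intro: hyperbolic_ring.intros derivative_eq_intros)
  next
    case inverse_cosh_diff
    let ?w = "\<lambda>t. 1 / (cosh t - \<kappa>)"
    have "(?w has_real_derivative -1 * (sinh t * (?w t * ?w t))) (at t)" for t
      using cosh_diff_pos[OF assms, of t]
      by (auto intro!: derivative_eq_intros simp: field_simps power2_eq_square)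
    moreover have "(\<lambda>t. -1 * (sinh t * (?w t * ?w t))) \<in> hyperbolic_ring \<kappa>"
      by (intro hyperbolic_ring.intros)
    ultimately show ?case by (intro bexI) auto
  next
    case (add f g)
    then obtain f' g' where "f' \<in> hyperbolic_ring \<kappa>" "g' \<in> hyperbolic_ring \<kappa>"
      "\<And>t. (f has_real_derivative f' t) (at t)" "\<And>t. (g has_real_derivative g' t) (at t)"
      by blast
    then show ?case
      by (intro bexI[of _ "\<lambda>t. f' t + g' t"]) (auto intro!: hyperbolic_ring.intros derivative_eq_intros)
  next
    case (mult f g)
    then obtain f' g' where "f' \<in> hyperbolic_ring \<kappa>" "g' \<in> hyperbolic_ring \<kappa>"
      "\<And>t. (f has_real_derivative f' t) (at t)" "\<And>t. (g has_real_derivative g' t) (at t)"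
      by blast
    with mult.hyps show ?case
      by (intro bexI[of _ "\<lambda>t. f' t * g t + f t * g' t"])
         (auto intro!: hyperbolic_ring.intros derivative_eq_intros)
  qed
qed

definition G_hyp :: "real \<Rightarrow> real \<Rightarrow> real" where
  "G_hyp \<kappa> t = sinh t - \<kappa> * t"

definition H_hyp :: "real \<Rightarrow> real \<Rightarrow> real" where
  "H_hyp \<kappa> = inv (G_hyp \<kappa>)"

lemma G_hyp_has_real_derivative: "(G_hyp \<kappa> has_real_derivative cosh t - \<kappa>) (at t)"
  unfolding G_hyp_def by (auto intro!: derivative_eq_intros)

lemma isCont_G_hyp: "isCont (G_hyp \<kappa>) t"
  using G_hyp_has_real_derivative by (rule DERIV_isCont)

lemma G_hyp_minus: "G_hyp \<kappa> (- t) = - G_hyp \<kappa> t"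
  unfolding G_hyp_def by simp

lemma G_hyp_0 [simp]: "G_hyp \<kappa> 0 = 0"
  unfolding G_hyp_def by simp

lemma G_cosh: "0 \<le> t \<Longrightarrow> G \<kappa> (cosh t) = G_hyp \<kappa> t"
  unfolding G_def G_hyp_def
  by (metis arcosh_cosh_real cosh_real_ge_1 sinh_arcosh_real cosh_plus_sinh ln_exp)

lemma strict_mono_G_hyp: "\<kappa> < 1 \<Longrightarrow> strict_mono (G_hyp \<kappa>)"
  unfolding strict_mono_def
  using DERIV_pos_imp_increasing G_hyp_has_real_derivative cosh_diff_pos by blast

lemma G_hyp_lower_bound:
  assumes "0 \<le> t" shows "(1 - \<kappa>) * t \<le> G_hyp \<kappa> t"
  using real_le_x_sinh[OF assms] unfolding G_hyp_def sinh_field_def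
  by (simp add: exp_minus algebra_simps)

lemma surj_G_hyp:
  assumes "\<kappa> < 1" shows "surj (G_hyp \<kappa>)"
proof -
  have "\<exists>t. G_hyp \<kappa> t = y" for y
  proof -
    define b where "b = \<bar>y\<bar> / (1 - \<kappa>)"
    have "0 \<le> b" "(1 - \<kappa>) * b = \<bar>y\<bar>"
      using assms by (simp_all add: b_def)
    then have "\<bar>y\<bar> \<le> G_hyp \<kappa> b"
      using G_hyp_lower_bound by metis
    then have "G_hyp \<kappa> (- b) \<le> y" "y \<le> G_hyp \<kappa> b" "- b \<le> b"
      using \<open>0 \<le> b\<close> by (auto simp: G_hyp_minus)
    then show ?thesis
      using IVT[of "G_hyp \<kappa>"] isCont_G_hyp by blast
  qed
  then show ?thesis by (metis surjI)
qed

lemma G_hyp_H_hyp [simp]: "\<kappa> < 1 \<Longrightarrow> G_hyp \<kappa> (H_hyp \<kappa> y) = y"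
  unfolding H_hyp_def by (simp add: surj_G_hyp surj_f_inv_f)

lemma H_hyp_G_hyp [simp]: "\<kappa> < 1 \<Longrightarrow> H_hyp \<kappa> (G_hyp \<kappa> t) = t"
  unfolding H_hyp_def by (simp add: strict_mono_G_hyp strict_mono_imp_inj_on inv_f_f)

lemma H_hyp_less_iff: "\<kappa> < 1 \<Longrightarrow> t < H_hyp \<kappa> y \<longleftrightarrow> G_hyp \<kappa> t < y"
  by (metis G_hyp_H_hyp strict_mono_G_hyp strict_mono_less)

lemma H_hyp_0 [simp]: "\<kappa> < 1 \<Longrightarrow> H_hyp \<kappa> 0 = 0"
  using H_hyp_G_hyp[of \<kappa> 0] by simp

lemma isCont_H_hyp:
  assumes "\<kappa> < 1" shows "isCont (H_hyp \<kappa>) y"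
  using isCont_inverse_function[where d=1 and x="H_hyp \<kappa> y" and f="G_hyp \<kappa>" and g="H_hyp \<kappa>"] assms
  by (simp add: isCont_G_hyp)

lemma H_hyp_has_real_derivative:
  assumes "\<kappa> < 1"
  shows "(H_hyp \<kappa> has_real_derivative 1 / (cosh (H_hyp \<kappa> y) - \<kappa>)) (at y)"
proof -
  have "(H_hyp \<kappa> has_real_derivative inverse (cosh (H_hyp \<kappa> y) - \<kappa>)) (at y)"
    using G_hyp_has_real_derivative isCont_H_hyp[OF assms] assms
      cosh_diff_pos[OF assms, of "H_hyp \<kappa> y"]
    by (intro DERIV_inverse_function[where a="y - 1" and b="y + 1"]) auto
  then show ?thesis by (simp add: divide_inverse)
qed

lemma H_eq_cosh_H_hyp:
  assumes "\<kappa> < 1" "0 \<le> y" shows "H \<kappa> y = cosh (H_hyp \<kappa> y)"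
proof -
  have G_arcosh: "G \<kappa> a = G_hyp \<kappa> (arcosh a)" if "1 \<le> a" for a
    using G_cosh[of "arcosh a" \<kappa>] that by simp
  have "inj_on (G \<kappa>) {1..}"
  proof
    fix a b :: real assume "a \<in> {1..}" "b \<in> {1..}" "G \<kappa> a = G \<kappa> b"
    then have "arcosh a = arcosh b"
      using G_arcosh strict_mono_eq[OF strict_mono_G_hyp[OF assms(1)]] by auto
    with \<open>a \<in> {1..}\<close> \<open>b \<in> {1..}\<close> show "a = b"
      by (metis atLeast_iff cosh_arcosh_real)
  qed
  moreover have "0 \<le> H_hyp \<kappa> y"
    using H_hyp_less_iff[OF assms(1), of 0 y] assms(2) H_hyp_0[OF assms(1)] by fastforce
  ultimately show ?thesis
    unfolding H_def using assms cosh_real_ge_1 G_cosh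
    by (intro inv_into_f_eq) auto
qed

lemma H_derivatives:
  assumes "\<kappa> < 1"
  shows "\<exists>D. D 0 = H \<kappa> \<and> (\<forall>n. \<forall>x\<ge>0. (D n has_real_derivative D (Suc n) x) (at x within {0..}))"
proof -
  have "derivative_closed ((\<lambda>f. f \<circ> H_hyp \<kappa>) ` hyperbolic_ring \<kappa>)"
    using derivative_closed_hyperbolic_ring hyperbolic_ring.mult hyperbolic_ring.inverse_cosh_diff
      H_hyp_has_real_derivative assms
    by (intro derivative_closed_compose) auto
  then obtain D where D0: "D 0 = cosh \<circ> H_hyp \<kappa>"
    and D: "\<And>n t. (D n has_real_derivative D (Suc n) t) (at t)"
    using derivative_closed_derivatives hyperbolic_ring.cosh by blast
  \<comment> \<open>\<open>cosh \<circ> H_hyp \<kappa>\<close> agrees with \<open>H \<kappa>\<close> only on \<open>{0..}\<close>, which is all that derivatives within \<open>{0..}\<close> see.\<close>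
  define D' where "D' = D(0 := H \<kappa>)"
  have "(D' n has_real_derivative D' (Suc n) x) (at x within {0..})" if "0 \<le> x" for n x
  proof (cases n)
    case 0
    have "(D 0 has_real_derivative D' (Suc 0) x) (at x within {0..})"
      using D[of 0 x] by (simp add: D'_def has_field_derivative_at_within)
    then show ?thesis
      unfolding 0
    proof (rule has_field_derivative_transform_within[OF _ zero_less_one])
      show "x \<in> {0..}" using \<open>0 \<le> x\<close> by simp
      show "D 0 y = D' 0 y" if "y \<in> {0..}" for y
        using that by (simp add: D'_def D0 H_eq_cosh_H_hyp[OF assms])
    qed
  next
    case (Suc m)
    then show ?thesis using D[of n x] by (simp add: D'_def has_field_derivative_at_within)
  qed
  then show ?thesis by (intro exI[of _ D']) (simp add: D'_def)
qed

lemma filterlim_H_hyp_at_right_0: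
  assumes "\<kappa> < 1" shows "filterlim (H_hyp \<kappa>) (at_right 0) (at_right 0)"
proof -
  have "(H_hyp \<kappa> \<longlongrightarrow> 0) (at_right 0)"
    using isCont_H_hyp[OF assms, of 0] assms by (simp add: isCont_def filterlim_at_split)
  moreover have "eventually (\<lambda>y. 0 < H_hyp \<kappa> y) (at_right 0)"
    using eventually_at_right_less[of 0] by eventually_elim (simp add: H_hyp_less_iff assms)
  ultimately show ?thesis
    unfolding filterlim_at by (auto elim: eventually_mono)
qed

lemma filterlim_H_hyp_at_top:
  assumes "\<kappa> < 1" shows "filterlim (H_hyp \<kappa>) at_top at_top"
  unfolding filterlim_at_top
proof
  fix Z
  show "eventually (\<lambda>y. Z \<le> H_hyp \<kappa> y) at_top"
    using eventually_gt_at_top[of "G_hyp \<kappa> Z"]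
    by eventually_elim (simp add: H_hyp_less_iff[OF assms] less_imp_le)
qed

lemma cosh_expansion_at_0:
  assumes "\<kappa> < 1"
  shows "(\<lambda>t. cosh t - 1 - (G_hyp \<kappa> t)\<^sup>2 / (2 * (1 - \<kappa>)\<^sup>2)) \<in> o[at_right 0](\<lambda>t. (G_hyp \<kappa> t)\<^sup>2 / (1 - \<kappa>)\<^sup>2)"
  unfolding G_hyp_def using assms by real_asymp

lemma cosh_expansion_at_top:
  assumes "\<kappa> < 1"
  shows "(\<lambda>t. cosh t - G_hyp \<kappa> t - \<kappa> * ln (G_hyp \<kappa> t) - \<kappa>\<^sup>2 * ln (G_hyp \<kappa> t) / G_hyp \<kappa> t)
      \<in> O[at_top](\<lambda>_. 1)"
  unfolding G_hyp_def using assms by real_asymp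

lemma H_expansion_at_0:
  assumes "\<kappa> < 1"
  shows "(\<lambda>x. H \<kappa> x - 1 - x\<^sup>2 / (2 * (1 - \<kappa>)\<^sup>2)) \<in> o[at_right 0](\<lambda>x. x\<^sup>2 / (1 - \<kappa>)\<^sup>2)"
proof -
  from landau_o.small.compose[OF cosh_expansion_at_0[OF assms] filterlim_H_hyp_at_right_0[OF assms]]
  have "(\<lambda>x. cosh (H_hyp \<kappa> x) - 1 - x\<^sup>2 / (2 * (1 - \<kappa>)\<^sup>2)) \<in> o[at_right 0](\<lambda>x. x\<^sup>2 / (1 - \<kappa>)\<^sup>2)"
    using assms by simp
  moreover have "eventually (\<lambda>x. cosh (H_hyp \<kappa> x) - 1 - x\<^sup>2 / (2 * (1 - \<kappa>)\<^sup>2)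
      = H \<kappa> x - 1 - x\<^sup>2 / (2 * (1 - \<kappa>)\<^sup>2)) (at_right 0)"
    using eventually_at_right_less[of 0] by eventually_elim (simp add: H_eq_cosh_H_hyp assms)
  ultimately show ?thesis
    by (rule landau_o.small.in_cong[THEN iffD1, rotated])
qed

lemma H_expansion_at_top:
  assumes "\<kappa> < 1"
  shows "(\<lambda>x. H \<kappa> x - x - \<kappa> * ln x - \<kappa>\<^sup>2 * ln x / x) \<in> O[at_top](\<lambda>_. 1)"
proof -
  from landau_o.big.compose[OF cosh_expansion_at_top[OF assms] filterlim_H_hyp_at_top[OF assms]]
  have "(\<lambda>x. cosh (H_hyp \<kappa> x) - x - \<kappa> * ln x - \<kappa>\<^sup>2 * ln x / x) \<in> O[at_top](\<lambda>_. 1)"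
    using assms by simp
  moreover have "eventually (\<lambda>x. cosh (H_hyp \<kappa> x) - x - \<kappa> * ln x - \<kappa>\<^sup>2 * ln x / x
      = H \<kappa> x - x - \<kappa> * ln x - \<kappa>\<^sup>2 * ln x / x) at_top"
    using eventually_ge_at_top[of 0] by eventually_elim (simp add: H_eq_cosh_H_hyp assms)
  ultimately show ?thesis
    by (rule landau_o.big.in_cong[THEN iffD1, rotated])
qed

theorem lemma2p10:
  fixes \<kappa> :: real
  assumes "0 < \<kappa>" and "\<kappa> < 1"
  shows "(\<exists>D :: nat \<Rightarrow> real \<Rightarrow> real. D 0 = H \<kappa> \<and>
            (\<forall>n. \<forall>x\<ge>0. (D n has_real_derivative D (Suc n) x) (at x within {0..})))
     \<and> (\<lambda>x. H \<kappa> x - 1 - x\<^sup>2 / (2 * (1 - \<kappa>)\<^sup>2)) \<in> o[at_right 0](\<lambda>x. x\<^sup>2 / (1 - \<kappa>)\<^sup>2)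
     \<and> (\<lambda>x. H \<kappa> x - x - \<kappa> * ln x - \<kappa>\<^sup>2 * ln x / x) \<in> O[at_top](\<lambda>_. 1)"
  by (intro conjI H_derivatives H_expansion_at_0 H_expansion_at_top assms(2))

end
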